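(* Let $0<\beta_1<\beta_2$. There is a unique $a=a(\beta_1,\beta_2)\in(0,1/\beta_1)$ satisfying $$a\beta_1-1+(a\beta_2+1)e^{-a(\beta_1+\beta_2)}=0.$$ Moreover, $\lim_{\beta_1/\beta_2\to0} a(\beta_1,\beta_2)\,\beta_1=1$. *)

theory Defs
  imports Complex_Main
begin

definition root_eq :: "real \<Rightarrow> real \<Rightarrow> real \<Rightarrow> bool" where
  "root_eq b1 b2 a \<longleftrightarrow> a * b1 - 1 + (a * b2 + 1) * exp (- a * (b1 + b2)) = 0"

definition a_of :: "real \<Rightarrow> real \<Rightarrow> real" where
  "a_of b1 b2 = (THE a. a \<in> {0<..<1 / b1} \<and> root_eq b1 b2 a)"

end

theory Submission
  imports Defs
begin

text \<open>
  Multiplying the equation by \<open>exp (a (\<beta>1 + \<beta>2))\<close> turns it into \<open>h a = 0\<close> with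
  \<open>h a = (1 - a \<beta>1) exp (a (\<beta>1 + \<beta>2)) - a \<beta>2 - 1\<close>. Here \<open>h 0 = h' 0 = 0\<close>, and
  \<open>h''\<close> is positive before and negative after the point
  \<open>a\<^sub>0 = (\<beta>2 - \<beta>1) / ((\<beta>1 + \<beta>2) \<beta>1) < 1 / \<beta>1\<close>. Hence \<open>h\<close> is positive on
  \<open>(0, a\<^sub>0]\<close>, while on \<open>[a\<^sub>0, \<infinity>)\<close> it is concave, so after its first zero it stays
  negative; since \<open>h (1 / \<beta>1) < 0\<close>, there is exactly one zero in \<open>(0, 1 / \<beta>1)\<close>.
  For the limit, \<open>h ((1 - e) / \<beta>1) = e exp ((1 - e) (1 + r)) - (1 - e) r - 1\<close> with
  \<open>r = \<beta>2 / \<beta>1\<close> is positive for large \<open>r\<close>, because the exponential outgrows the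
  linear term; so \<open>(1 - e) / \<beta>1 < a < 1 / \<beta>1\<close>.
\<close>

definition root_fun :: "real \<Rightarrow> real \<Rightarrow> real \<Rightarrow> real" where
  "root_fun b1 b2 a = (1 - a * b1) * exp (a * (b1 + b2)) - a * b2 - 1"

definition root_fun_deriv :: "real \<Rightarrow> real \<Rightarrow> real \<Rightarrow> real" where
  "root_fun_deriv b1 b2 a = exp (a * (b1 + b2)) * (b2 - (b1 + b2) * b1 * a) - b2"

lemma root_eq_iff_root_fun_eq_0: "root_eq b1 b2 a \<longleftrightarrow> root_fun b1 b2 a = 0"
proof -
  have inverse: "exp (- a * (b1 + b2)) = inverse (exp (a * (b1 + b2)))"
    by (simp add: exp_minus [symmetric])
  have "0 < exp (a * (b1 + b2))"
    by simp
  then show ?thesis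
    unfolding root_eq_def root_fun_def inverse by (auto simp: field_simps)
qed

lemma has_real_derivative_root_fun:
  "(root_fun b1 b2 has_real_derivative root_fun_deriv b1 b2 a) (at a)"
  unfolding root_fun_def [abs_def] root_fun_deriv_def
  by (auto intro!: derivative_eq_intros simp: algebra_simps)

lemma has_real_derivative_root_fun_deriv:
  "(root_fun_deriv b1 b2 has_real_derivative
     (b1 + b2) * exp (a * (b1 + b2)) * (b2 - b1 - (b1 + b2) * b1 * a)) (at a)"
  unfolding root_fun_deriv_def [abs_def]
  by (auto intro!: derivative_eq_intros simp: algebra_simps)

lemma exp_gt_quarter_square:
  fixes t :: real
  assumes "0 \<le> t"
  shows "t\<^sup>2 / 4 < exp t"
proof -
  have "t\<^sup>2 / 4 < (1 + t / 2)\<^sup>2"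
    using assms by (simp add: power2_eq_square field_simps)
  also have "\<dots> \<le> exp t"
    using exp_ge_one_plus_x_over_n_power_n[where x = t and n = 2] assms by simp
  finally show ?thesis .
qed

lemma neg_beyond_zero_if_deriv_decreasing:
  fixes f f' :: "real \<Rightarrow> real"
  assumes deriv: "\<And>x. a \<le> x \<Longrightarrow> (f has_real_derivative f' x) (at x)"
    and decreasing: "\<And>u v. a \<le> u \<Longrightarrow> u < v \<Longrightarrow> f' v < f' u"
    and "0 < f a" "f c = 0" "a < c" "c < d"
  shows "f d < 0"
proof -
  obtain z1 where z1: "a < z1" "z1 < c" "f c - f a = (c - a) * f' z1"
    using MVT2[OF \<open>a < c\<close>, of f f'] deriv by blast
  obtain z2 where z2: "c < z2" "z2 < d" "f d - f c = (d - c) * f' z2"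
    using MVT2[OF \<open>c < d\<close>, of f f'] deriv \<open>a < c\<close> by fastforce
  have "(c - a) * f' z1 < 0"
    using z1 assms by simp
  then have "f' z1 < 0"
    using z1 by (simp add: mult_less_0_iff)
  moreover have "f' z2 < f' z1"
    using decreasing z1 z2 by simp
  ultimately show ?thesis
    using z2 assms by (simp add: mult_pos_neg)
qed

definition inflection :: "real \<Rightarrow> real \<Rightarrow> real" where
  "inflection b1 b2 = (b2 - b1) / ((b1 + b2) * b1)"

context
  fixes b1 b2 :: real
  assumes b1_pos: "0 < b1" and b1_less_b2: "b1 < b2"
begin

lemma inflection_pos: "0 < inflection b1 b2"
  using b1_pos b1_less_b2 by (simp add: inflection_def)

lemma inflection_less_inverse: "inflection b1 b2 < 1 / b1"
  using b1_pos b1_less_b2 by (simp add: inflection_def divide_simps)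

lemma less_inflection_iff: "x < inflection b1 b2 \<longleftrightarrow> (b1 + b2) * b1 * x < b2 - b1"
  using b1_pos b1_less_b2 by (simp add: inflection_def pos_less_divide_eq mult.commute)

lemma inflection_less_iff: "inflection b1 b2 < x \<longleftrightarrow> b2 - b1 < (b1 + b2) * b1 * x"
  using b1_pos b1_less_b2 by (simp add: inflection_def pos_divide_less_eq mult.commute)

lemma root_fun_deriv_strict_increasing:
  assumes "u < v" "v \<le> inflection b1 b2"
  shows "root_fun_deriv b1 b2 u < root_fun_deriv b1 b2 v"
proof (rule DERIV_pos_imp_increasing_open[OF \<open>u < v\<close>])
  fix x assume "u < x" "x < v"
  then have "x < inflection b1 b2"
    using assms by simp
  then have "(b1 + b2) * b1 * x < b2 - b1"
    by (simp add: less_inflection_iff)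
  then show "\<exists>y. DERIV (root_fun_deriv b1 b2) x :> y \<and> y > 0"
    using has_real_derivative_root_fun_deriv b1_pos b1_less_b2 by force
next
  show "continuous_on {u..v} (root_fun_deriv b1 b2)"
    using has_real_derivative_root_fun_deriv
    by (meson DERIV_isCont continuous_at_imp_continuous_on)
qed

lemma root_fun_deriv_strict_decreasing:
  assumes "inflection b1 b2 \<le> u" "u < v"
  shows "root_fun_deriv b1 b2 v < root_fun_deriv b1 b2 u"
proof (rule DERIV_neg_imp_decreasing_open[OF \<open>u < v\<close>])
  fix x assume "u < x" "x < v"
  then have "inflection b1 b2 < x"
    using assms by simp
  then have "b2 - b1 < (b1 + b2) * b1 * x"
    by (simp add: inflection_less_iff)
  then show "\<exists>y. DERIV (root_fun_deriv b1 b2) x :> y \<and> y < 0"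
    using has_real_derivative_root_fun_deriv b1_pos b1_less_b2
    by (force simp: mult_pos_neg)
next
  show "continuous_on {u..v} (root_fun_deriv b1 b2)"
    using has_real_derivative_root_fun_deriv
    by (meson DERIV_isCont continuous_at_imp_continuous_on)
qed

lemma root_fun_pos:
  assumes "0 < x" "x \<le> inflection b1 b2"
  shows "0 < root_fun b1 b2 x"
proof -
  have "root_fun b1 b2 0 < root_fun b1 b2 x"
  proof (rule DERIV_pos_imp_increasing_open[OF \<open>0 < x\<close>])
    fix y assume "0 < y" "y < x"
    then have "root_fun_deriv b1 b2 0 < root_fun_deriv b1 b2 y"
      using assms root_fun_deriv_strict_increasing by simp
    then show "\<exists>z. DERIV (root_fun b1 b2) y :> z \<and> z > 0"
      using has_real_derivative_root_fun by (force simp: root_fun_deriv_def)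
  next
    show "continuous_on {0..x} (root_fun b1 b2)"
      using has_real_derivative_root_fun
      by (meson DERIV_isCont continuous_at_imp_continuous_on)
  qed
  then show ?thesis
    by (simp add: root_fun_def)
qed

lemma root_fun_inverse_neg: "root_fun b1 b2 (1 / b1) < 0"
proof -
  have "0 < b2 / b1"
    using b1_pos b1_less_b2 by simp
  then show ?thesis
    using b1_pos by (simp add: root_fun_def)
qed

lemma root_fun_neg_beyond_zero:
  assumes "root_fun b1 b2 c = 0" "0 < c" "c < d"
  shows "root_fun b1 b2 d < 0"
proof -
  have "inflection b1 b2 < c"
    using root_fun_pos[of c] assms by (cases "c \<le> inflection b1 b2") auto
  then show ?thesis
    using neg_beyond_zero_if_deriv_decreasing[where f = "root_fun b1 b2"
        and f' = "root_fun_deriv b1 b2" and a = "inflection b1 b2"]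
      has_real_derivative_root_fun root_fun_deriv_strict_decreasing
      root_fun_pos[OF inflection_pos] assms
    by blast
qed

lemma ex1_root_fun_eq_0: "\<exists>!a. a \<in> {0<..<1 / b1} \<and> root_fun b1 b2 a = 0"
proof (rule ex_ex1I)
  have "continuous_on {inflection b1 b2..1 / b1} (root_fun b1 b2)"
    using has_real_derivative_root_fun
    by (meson DERIV_isCont continuous_at_imp_continuous_on)
  then obtain c where c: "inflection b1 b2 \<le> c" "c \<le> 1 / b1" "root_fun b1 b2 c = 0"
    using IVT2'[of "root_fun b1 b2" "1 / b1" 0 "inflection b1 b2"]
      root_fun_inverse_neg root_fun_pos[OF inflection_pos] inflection_less_inverse
    by force
  then have "c \<noteq> 1 / b1"
    using root_fun_inverse_neg by auto
  then show "\<exists>a. a \<in> {0<..<1 / b1} \<and> root_fun b1 b2 a = 0"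
    using c inflection_pos by (intro exI[of _ c]) auto
next
  show "c = d" if "c \<in> {0<..<1 / b1} \<and> root_fun b1 b2 c = 0"
    and "d \<in> {0<..<1 / b1} \<and> root_fun b1 b2 d = 0" for c d
    using root_fun_neg_beyond_zero[of c d] root_fun_neg_beyond_zero[of d c] that
    by (cases c d rule: linorder_cases) auto
qed

lemma a_of_root: "a_of b1 b2 \<in> {0<..<1 / b1} \<and> root_fun b1 b2 (a_of b1 b2) = 0"
  unfolding a_of_def root_eq_iff_root_fun_eq_0 by (rule theI' [OF ex1_root_fun_eq_0])

lemma less_a_of_if_root_fun_pos:
  assumes "0 < y" "0 < root_fun b1 b2 y"
  shows "y < a_of b1 b2"
  using root_fun_neg_beyond_zero[of "a_of b1 b2" y] a_of_root assms
  by (cases y "a_of b1 b2" rule: linorder_cases) auto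

lemma a_of_lower_bound:
  assumes "0 < e" "e < 1" and small: "b1 / b2 < e * (1 - e)\<^sup>2 / 4"
  shows "(1 - e) / b1 < a_of b1 b2"
proof (rule less_a_of_if_root_fun_pos)
  define r where "r = b2 / b1"
  define t where "t = (1 - e) * (1 + r)"
  have "0 < r"
    using b1_pos b1_less_b2 by (simp add: r_def)
  then have "0 < t"
    using assms by (simp add: t_def)
  define k where "k = e * (1 - e)\<^sup>2 / 4"
  have "1 < k * r"
    using small b1_pos b1_less_b2 by (simp add: k_def r_def field_simps)
  moreover have "0 < k"
    using assms by (simp add: k_def)
  ultimately have "1 < k * (1 + r)"
    by (simp add: algebra_simps)
  then have "1 * (1 + r) < k * (1 + r) * (1 + r)"
    using \<open>0 < r\<close> by (intro mult_strict_right_mono) auto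
  also have "\<dots> = e * (t\<^sup>2 / 4)"
    by (simp add: k_def t_def power2_eq_square)
  also have "\<dots> < e * exp t"
    using exp_gt_quarter_square \<open>0 < t\<close> \<open>0 < e\<close> by simp
  finally have "(1 - e) * r + 1 < e * exp t"
    using mult_pos_pos[OF \<open>0 < e\<close> \<open>0 < r\<close>] by (simp add: algebra_simps)
  moreover have "root_fun b1 b2 ((1 - e) / b1) = e * exp t - (1 - e) * r - 1"
    using b1_pos by (simp add: root_fun_def r_def t_def field_simps)
  ultimately show "0 < root_fun b1 b2 ((1 - e) / b1)"
    by simp
  show "0 < (1 - e) / b1"
    using assms b1_pos by simp
qed

end

theorem lemma2p2:
  fixes \<beta>1 \<beta>2 :: real
  assumes "0 < \<beta>1" and "\<beta>1 < \<beta>2"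
  shows "(\<exists>!a. a \<in> {0<..<1 / \<beta>1} \<and> root_eq \<beta>1 \<beta>2 a)
    \<and> (\<forall>\<epsilon>>0. \<exists>\<delta>>0. \<forall>b1 b2. 0 < b1 \<and> b1 < b2 \<and> b1 / b2 < \<delta>
          \<longrightarrow> \<bar>a_of b1 b2 * b1 - 1\<bar> < \<epsilon>)"
proof (intro conjI allI impI)
  show "\<exists>!a. a \<in> {0<..<1 / \<beta>1} \<and> root_eq \<beta>1 \<beta>2 a"
    using ex1_root_fun_eq_0[OF assms] by (simp add: root_eq_iff_root_fun_eq_0)
next
  fix \<epsilon> :: real
  assume "0 < \<epsilon>"
  define e where "e = min \<epsilon> (1 / 2)"
  have e: "0 < e" "e < 1" "e \<le> \<epsilon>"
    using \<open>0 < \<epsilon>\<close> by (auto simp: e_def)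
  have "\<bar>a_of b1 b2 * b1 - 1\<bar> < \<epsilon>"
    if "0 < b1" "b1 < b2" "b1 / b2 < e * (1 - e)\<^sup>2 / 4" for b1 b2
  proof -
    have "(1 - e) / b1 < a_of b1 b2" "a_of b1 b2 < 1 / b1"
      using a_of_lower_bound[OF that(1,2) e(1,2) that(3)] a_of_root[OF that(1,2)] by auto
    then show ?thesis
      using that e by (simp add: field_simps)
  qed
  moreover have "0 < e * (1 - e)\<^sup>2 / 4"
    using e by simp
  ultimately show "\<exists>\<delta>>0. \<forall>b1 b2. 0 < b1 \<and> b1 < b2 \<and> b1 / b2 < \<delta>
      \<longrightarrow> \<bar>a_of b1 b2 * b1 - 1\<bar> < \<epsilon>"
    by blast
qed

end
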